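(* Suppose $T$ has geometric elimination of imaginaries. For each $e\in\mathbb M^{eq}$ choose a geometric canonical parameter $g(e)$ for $e$, with $g(a)=a$ for real $a\in\mathbb M$, and for $A\subset\mathbb M^{eq}$ put $g(A)=\bigcup\{g(e):e\in A\}$. Then: (a) for all $A,B,C\subset\mathbb M^{eq}$, $A\mathop{\downarrow}^a_C B$ holds in $\mathbb M^{eq}$ if and only if $g(A)\mathop{\downarrow}^a_{g(C)}g(B)$ holds in $\mathbb M$; (b) $T$ is modular if and only if $T^{eq}$ is modular.
   Context: A geometric canonical parameter for $e\in\mathbb M^{eq}$ is a finite real tuple $c$ with $c\in\operatorname{acl}^{eq}(e)$ and $e\in\operatorname{acl}^{eq}(c)$; $T$ has geometric elimination of imaginaries if every imaginary has one. In $\mathbb M$: $A\mathop{\downarrow}^a_C B$ iff $\operatorname{acl}(AC)\cap\operatorname{acl}(BC)=\operatorname{acl}(C)$; in $\mathbb M^{eq}$ the same with $\operatorname{acl}^{eq}$. $T$ (resp. $T^{eq}$) is modular if $\mathop{\downarrow}^a$ in $\mathbb M$ (resp. $\mathbb M^{eq}$) satisfies base monotonicity: for $D\subseteq C\subseteq B$, $A\mathop{\downarrow}^a_D B$ implies $A\mathop{\downarrow}^a_C B$. *)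

theory Defs
  imports Main
begin

text \<open>Abstract rendering of the setting.  The type 'e is the universe of the
monster model M^eq, the set M :: 'e set is its home (real) sort, acleq is
acl^eq on M^eq and acl is acl on M.\<close>

definition closure_op :: "('e set \<Rightarrow> 'e set) \<Rightarrow> bool" where
  "closure_op cl \<longleftrightarrow>
     (\<forall>A. A \<subseteq> cl A) \<and> (\<forall>A B. A \<subseteq> B \<longrightarrow> cl A \<subseteq> cl B) \<and> (\<forall>A. cl (cl A) = cl A)"

definition a_indep :: "('e set \<Rightarrow> 'e set) \<Rightarrow> 'e set \<Rightarrow> 'e set \<Rightarrow> 'e set \<Rightarrow> bool" where
  "a_indep cl A C B \<longleftrightarrow> cl (A \<union> C) \<inter> cl (B \<union> C) = cl C"

definition modular_on :: "('e set \<Rightarrow> 'e set) \<Rightarrow> 'e set \<Rightarrow> bool" where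
  "modular_on cl U \<longleftrightarrow>
     (\<forall>A B C D. A \<subseteq> U \<longrightarrow> B \<subseteq> U \<longrightarrow> C \<subseteq> U \<longrightarrow> D \<subseteq> U \<longrightarrow>
        D \<subseteq> C \<longrightarrow> C \<subseteq> B \<longrightarrow> a_indep cl A D B \<longrightarrow> a_indep cl A C B)"

text \<open>g is a geometric canonical parameter choice: g e is a finite real tuple
(finite subset of M) interalgebraic with e, and g a = a for real a.\<close>
definition geom_canonical_choice ::
  "'e set \<Rightarrow> ('e set \<Rightarrow> 'e set) \<Rightarrow> ('e \<Rightarrow> 'e set) \<Rightarrow> bool" where
  "geom_canonical_choice M acleq g \<longleftrightarrow>
     (\<forall>e. finite (g e) \<and> g e \<subseteq> M \<and> g e \<subseteq> acleq {e} \<and> e \<in> acleq (g e)) \<and>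
     (\<forall>a\<in>M. g a = {a})"

definition gimg :: "('e \<Rightarrow> 'e set) \<Rightarrow> 'e set \<Rightarrow> 'e set" where
  "gimg g A = \<Union> (g ` A)"

end

theory Submission
  imports Defs
begin

text \<open>Since e and g(e) are interalgebraic, acl^eq(g(A)) = acl^eq(A), and an element e lies in an
acl^eq-closed set exactly when its real tuple g(e) does.  So an acl^eq-closed set is determined
by its trace on M, which is the acl-closure of the corresponding g-image; independence in
M^eq therefore transfers to M and back.  Part (b) follows from (a): g is monotone, and it is the
identity on real sets.\<close>

lemma closure_op_subset_iff:
  assumes "closure_op cl"
  shows "A \<subseteq> cl B \<longleftrightarrow> cl A \<subseteq> cl B"
  using assms unfolding closure_op_def by (metis order_trans)

lemma closure_op_mono:
  "closure_op cl \<Longrightarrow> A \<subseteq> B \<Longrightarrow> cl A \<subseteq> cl B"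
  unfolding closure_op_def by blast

lemma gimg_Un: "gimg g (A \<union> B) = gimg g A \<union> gimg g B"
  unfolding gimg_def by blast

lemma gimg_mono: "A \<subseteq> B \<Longrightarrow> gimg g A \<subseteq> gimg g B"
  unfolding gimg_def by blast

context
  fixes M :: "'e set" and acleq :: "'e set \<Rightarrow> 'e set" and g :: "'e \<Rightarrow> 'e set"
  assumes closure: "closure_op acleq"
    and choice: "geom_canonical_choice M acleq g"
begin

lemma gimg_subset_real: "gimg g A \<subseteq> M"
  using choice unfolding geom_canonical_choice_def gimg_def by blast

lemma gimg_real:
  assumes "A \<subseteq> M"
  shows "gimg g A = A"
proof -
  have "\<And>a. a \<in> A \<Longrightarrow> g a = {a}"
    using choice assms unfolding geom_canonical_choice_def by blast
  then have "g ` A = (\<lambda>a. {a}) ` A"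
    by (simp cong: image_cong)
  then show ?thesis
    unfolding gimg_def by simp
qed

lemma acleq_gimg: "acleq (gimg g A) = acleq A"
proof (rule antisym)
  have "g e \<subseteq> acleq A" if "e \<in> A" for e
    using choice closure_op_mono[OF closure, of "{e}" A] that
    unfolding geom_canonical_choice_def by blast
  then show "acleq (gimg g A) \<subseteq> acleq A"
    using closure_op_subset_iff[OF closure] unfolding gimg_def by blast
next
  have "e \<in> acleq (gimg g A)" if "e \<in> A" for e
    using choice closure_op_mono[OF closure, of "g e" "gimg g A"] that
    unfolding geom_canonical_choice_def gimg_def by blast
  then show "acleq A \<subseteq> acleq (gimg g A)"
    using closure_op_subset_iff[OF closure] by blast
qed

lemma mem_acleq_iff_real_trace: "e \<in> acleq X \<longleftrightarrow> g e \<subseteq> acleq X \<inter> M"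
proof -
  have "e \<in> acleq X \<longleftrightarrow> acleq {e} \<subseteq> acleq X"
    using closure_op_subset_iff[OF closure, of "{e}" X] by simp
  also have "\<dots> \<longleftrightarrow> acleq (g e) \<subseteq> acleq X"
    using acleq_gimg[of "{e}"] by (simp add: gimg_def)
  also have "\<dots> \<longleftrightarrow> g e \<subseteq> acleq X"
    using closure_op_subset_iff[OF closure] by blast
  finally show ?thesis
    using choice unfolding geom_canonical_choice_def by blast
qed

lemma a_indep_iff_real_trace:
  "a_indep acleq A C B \<longleftrightarrow> acleq (A \<union> C) \<inter> acleq (B \<union> C) \<inter> M = acleq C \<inter> M"
proof
  assume trace: "acleq (A \<union> C) \<inter> acleq (B \<union> C) \<inter> M = acleq C \<inter> M"
  have "e \<in> acleq C" if "e \<in> acleq (A \<union> C)" and "e \<in> acleq (B \<union> C)" for e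
  proof -
    have "g e \<subseteq> acleq (A \<union> C) \<inter> acleq (B \<union> C) \<inter> M"
      using that mem_acleq_iff_real_trace by blast
    then show ?thesis
      using trace mem_acleq_iff_real_trace by simp
  qed
  moreover have "acleq C \<subseteq> acleq (A \<union> C)" "acleq C \<subseteq> acleq (B \<union> C)"
    using closure_op_mono[OF closure] by auto
  ultimately show "a_indep acleq A C B"
    unfolding a_indep_def by blast
qed (simp add: a_indep_def)

lemma a_indep_gimg_iff:
  assumes acl: "\<And>A. A \<subseteq> M \<Longrightarrow> acl A = acleq A \<inter> M"
  shows "a_indep acleq A C B \<longleftrightarrow> a_indep acl (gimg g A) (gimg g C) (gimg g B)"
proof -
  have acl_gimg: "acl (gimg g X) = acleq X \<inter> M" for X
    using acl[OF gimg_subset_real] acleq_gimg by simp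
  have "a_indep acl (gimg g A) (gimg g C) (gimg g B) \<longleftrightarrow>
      acleq (A \<union> C) \<inter> M \<inter> (acleq (B \<union> C) \<inter> M) = acleq C \<inter> M"
    unfolding a_indep_def gimg_Un[symmetric] acl_gimg ..
  then show ?thesis
    unfolding a_indep_iff_real_trace by (simp add: Int_ac)
qed

lemma modular_on_iff:
  assumes acl: "\<And>A. A \<subseteq> M \<Longrightarrow> acl A = acleq A \<inter> M"
  shows "modular_on acl M \<longleftrightarrow> modular_on acleq UNIV"
proof
  assume modular: "modular_on acl M"
  show "modular_on acleq UNIV"
    unfolding modular_on_def
  proof (intro allI impI)
    fix A B C D :: "'e set"
    assume "D \<subseteq> C" "C \<subseteq> B" "a_indep acleq A D B"
    then show "a_indep acleq A C B"
      using modular[unfolded modular_on_def, rule_format,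
          of "gimg g A" "gimg g B" "gimg g C" "gimg g D"]
        gimg_subset_real gimg_mono[of D C g] gimg_mono[of C B g]
        a_indep_gimg_iff[OF acl, of A D B] a_indep_gimg_iff[OF acl, of A C B]
      by simp
  qed
next
  assume modular: "modular_on acleq UNIV"
  show "modular_on acl M"
    unfolding modular_on_def
  proof (intro allI impI)
    fix A B C D :: "'e set"
    assume "A \<subseteq> M" "B \<subseteq> M" "C \<subseteq> M" "D \<subseteq> M" "D \<subseteq> C" "C \<subseteq> B" "a_indep acl A D B"
    then show "a_indep acl A C B"
      using modular[unfolded modular_on_def, rule_format, of A B C D]
        a_indep_gimg_iff[OF acl, of A D B] a_indep_gimg_iff[OF acl, of A C B]
      by (simp add: gimg_real)
  qed
qed

end

theorem lemma7p11:
  fixes M :: "'e set" and acleq acl :: "'e set \<Rightarrow> 'e set" and g :: "'e \<Rightarrow> 'e set"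
  assumes "closure_op acleq"
    and "\<And>A. A \<subseteq> M \<Longrightarrow> acl A = acleq A \<inter> M"
    and "geom_canonical_choice M acleq g"
  shows "(\<forall>A B C. a_indep acleq A C B \<longleftrightarrow> a_indep acl (gimg g A) (gimg g C) (gimg g B))
         \<and> (modular_on acl M \<longleftrightarrow> modular_on acleq UNIV)"
  using a_indep_gimg_iff[OF assms(1,3,2)] modular_on_iff[OF assms(1,3,2)] by blast

end
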